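(* Assume $\clubsuit$. Then: (1) For every family $\{A_\alpha:\alpha<\omega_2\}$ of unbounded subsets of $\omega_1$ and every ordinal $\tau<\omega\cdot\omega$ there is $B\subseteq\omega_2$, $|B|=\aleph_2$, such that $\mathrm{otp}(\bigcap_{\alpha\in B}A_\alpha)\geq\tau$. (2) For every $\tau<\omega\cdot\omega$, $\binom{\omega_2}{\omega_1}\rightarrow\binom{\omega_2}{\tau}^{1,1}_{\aleph_0}$ holds.
   Context: $\clubsuit$ (tiltan) at $\aleph_1$: there is a sequence $\langle T_\alpha:\alpha\in\lim(\omega_1)\rangle$ such that each $T_\alpha$ is a cofinal subset of $\alpha$, and for every unbounded $A\subseteq\omega_1$ the set $\{\alpha: T_\alpha\subseteq A\}$ is stationary. The polarized relation $\binom{\alpha}{\beta}\rightarrow\binom{\gamma}{\delta}^{1,1}_\theta$ means: for every $c:\alpha\times\beta\to\theta$ there are $A\subseteq\alpha$ of order type $\gamma$ and $B\subseteq\beta$ of order type $\delta$ such that $c\restriction(A\times B)$ is constant. *)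

theory Defs
  imports Main
begin

text \<open>omega_1 and omega_2 as initial well-orders (Cantor-style cardinal successors of natLeq = omega).\<close>
definition w1 :: "nat set rel" where "w1 = cardSuc natLeq"
definition w2 :: "nat set set rel" where "w2 = cardSuc w1"

definition omega_sq :: "(nat \<times> nat) rel" where
  "omega_sq = {((a,b),(c,d)). a < c \<or> (a = c \<and> b \<le> d)}"

definition unbounded1 :: "nat set set \<Rightarrow> bool" where
  "unbounded1 A \<longleftrightarrow> A \<subseteq> Field w1 \<and> (\<forall>x\<in>Field w1. \<exists>y\<in>A. (x,y) \<in> w1 \<and> y \<noteq> x)"

definition limit1 :: "nat set \<Rightarrow> bool" where
  "limit1 a \<longleftrightarrow> a \<in> Field w1 \<and> underS w1 a \<noteq> {} \<and>
     (\<forall>b\<in>underS w1 a. \<exists>c\<in>underS w1 a. b \<in> underS w1 c)"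

definition closed1 :: "nat set set \<Rightarrow> bool" where
  "closed1 C \<longleftrightarrow> C \<subseteq> Field w1 \<and>
     (\<forall>a. limit1 a \<longrightarrow> (\<forall>b\<in>underS w1 a. \<exists>c\<in>C \<inter> underS w1 a. b \<in> underS w1 c) \<longrightarrow> a \<in> C)"

definition club1 :: "nat set set \<Rightarrow> bool" where
  "club1 C \<longleftrightarrow> closed1 C \<and> unbounded1 C"

definition stationary1 :: "nat set set \<Rightarrow> bool" where
  "stationary1 S \<longleftrightarrow> S \<subseteq> Field w1 \<and> (\<forall>C. club1 C \<longrightarrow> S \<inter> C \<noteq> {})"

definition clubsuit :: bool where
  "clubsuit \<longleftrightarrow> (\<exists>T :: nat set \<Rightarrow> nat set set.
     (\<forall>a. limit1 a \<longrightarrow> T a \<subseteq> underS w1 a \<and> (\<forall>b\<in>underS w1 a. \<exists>c\<in>T a. (b,c) \<in> w1)) \<and>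
     (\<forall>A. unbounded1 A \<longrightarrow> stationary1 {a. limit1 a \<and> T a \<subseteq> A}))"

end

theory Submission
  imports Defs
begin

text \<open>
  By tiltan, every unbounded \<open>A\<^sub>\<alpha> \<subseteq> \<omega>\<^sub>1\<close> contains a guessing set \<open>T\<^sub>\<delta>\<close> with \<open>\<delta>\<close> above any
  prescribed \<open>\<beta>\<close>. There are only \<open>\<aleph>\<^sub>1\<close> possible \<open>\<delta>\<close>, so \<open>\<aleph>\<^sub>2\<close> many \<open>\<alpha>\<close> share one, and
  \<open>T\<^sub>\<delta>\<close>, being cofinal in the limit \<open>\<delta>\<close>, contains an \<open>\<omega>\<close>-sequence lying in all of these
  \<open>A\<^sub>\<alpha>\<close>. Repeating this above \<open>\<delta>\<close> finitely often gives \<open>\<aleph>\<^sub>2\<close> many \<open>\<alpha>\<close> whose common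
  intersection has order type at least \<open>\<omega>\<cdot>n\<close>, which bounds every \<open>\<tau> < \<omega>\<cdot>\<omega>\<close>.

  For the partition relation, each row \<open>c(\<alpha>, -)\<close> has a colour class that is unbounded, since
  \<open>\<omega>\<^sub>1\<close> is not a countable union of bounded (hence countable) sets; \<open>\<aleph>\<^sub>2\<close> many rows
  share that colour, and the first part applied to their colour classes yields the
  homogeneous rectangle.
\<close>

unbundle cardinal_syntax

lemma w1_Card_order: "Card_order w1"
  unfolding w1_def by (simp add: cardSuc_Card_order natLeq_Card_order)

lemma w2_Card_order: "Card_order w2"
  unfolding w2_def by (simp add: cardSuc_Card_order w1_Card_order)

lemma w1_Well_order: "Well_order w1"
  using w1_Card_order card_order_on_well_order_on by blast

lemma infinite_Field_w1: "infinite (Field w1)"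
  using Cinfinite_cardSuc[OF natLeq_Cinfinite] unfolding w1_def cinfinite_def by simp

lemma natLeq_ordLess_w1: "natLeq <o w1"
  unfolding w1_def by (rule cardSuc_greater[OF natLeq_Card_order])

lemma natLeq_ordLess_card_of_Field_w1: "natLeq <o |Field w1|"
  using natLeq_ordLess_w1 card_of_Field_ordIso[OF w1_Card_order]
  by (blast intro: ordLess_ordIso_trans ordIso_symmetric)

lemma w1_trans: "trans w1" and w1_antisym: "antisym w1"
  using w1_Well_order unfolding order_on_defs by auto

lemma w1_refl: "x \<in> Field w1 \<Longrightarrow> (x, x) \<in> w1"
  using w1_Well_order unfolding order_on_defs by (auto dest: refl_onD)

lemma w1_less_trans: "x \<in> underS w1 y \<Longrightarrow> y \<in> underS w1 z \<Longrightarrow> x \<in> underS w1 z"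
  using w1_trans w1_antisym unfolding underS_def trans_def antisym_def by blast

lemma w1_le_less_trans: "(x, y) \<in> w1 \<Longrightarrow> y \<in> underS w1 z \<Longrightarrow> x \<in> underS w1 z"
  using w1_trans w1_antisym unfolding underS_def trans_def antisym_def by blast

lemma w1_less_le_trans: "x \<in> underS w1 y \<Longrightarrow> (y, z) \<in> w1 \<Longrightarrow> x \<in> underS w1 z"
  using w1_trans w1_antisym unfolding underS_def trans_def antisym_def by blast

lemma w1_less_linear:
  "x \<in> Field w1 \<Longrightarrow> y \<in> Field w1 \<Longrightarrow> (x, y) \<in> w1 \<or> y \<in> underS w1 x"
proof -
  have "Refl w1" "total_on (Field w1) w1"
    using w1_Well_order unfolding order_on_defs by auto
  then show "x \<in> Field w1 \<Longrightarrow> y \<in> Field w1 \<Longrightarrow> (x, y) \<in> w1 \<or> y \<in> underS w1 x"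
    unfolding underS_def total_on_def by (cases "x = y") (auto dest: refl_onD)
qed

lemma w1_less_chain:
  assumes "\<And>k. g k \<in> underS w1 (g (Suc k))" and "k < k'"
  shows "g k \<in> underS w1 (g k')"
  using \<open>k < k'\<close>
proof (induction k')
  case (Suc k')
  then show ?case
    using assms(1) w1_less_trans by (cases "k = k'") auto
qed simp

section \<open>Comparing well-orders\<close>

lemma mem_aboveS_iff: "x \<in> aboveS r a \<longleftrightarrow> a \<in> underS r x"
  unfolding aboveS_def underS_def by blast

lemma underS_Restr_iff: "x \<in> underS (Restr r A) y \<longleftrightarrow> x \<in> underS r y \<and> x \<in> A \<and> y \<in> A"
  unfolding underS_def by blast

text \<open>A least \<open>x\<close> with \<open>\<phi> x < x\<close> would be undercut by \<open>\<phi> x\<close>.\<close>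

lemma strict_mono_not_underS:
  assumes r: "Well_order r" and strict: "\<And>x y. x \<in> underS r y \<Longrightarrow> \<phi> x \<in> underS r (\<phi> y)"
  shows "\<phi> x \<notin> underS r x"
proof (induction x rule: wf_induct[OF conjunct2[OF r[unfolded well_order_on_def]]])
  case (1 x)
  show ?case
  proof
    assume less: "\<phi> x \<in> underS r x"
    then have "(\<phi> x, x) \<in> r - Id"
      unfolding underS_def by blast
    with 1 strict[OF less] show False
      by blast
  qed
qed

lemma ordLeq_if_strict_mono:
  assumes r: "Well_order r" and r': "Well_order r'"
    and maps: "h ` Field r \<subseteq> Field r'"
    and strict: "\<And>x y. x \<in> underS r y \<Longrightarrow> h x \<in> underS r' (h y)"
  shows "r \<le>o r'"
proof (rule ccontr)
  assume "\<not> r \<le>o r'"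
  then have "r' <o r"
    using not_ordLeq_iff_ordLess r r' by blast
  then obtain a g where a: "a \<in> Field r" and g: "iso r' (Restr r (underS r a)) g"
    using ordLess_iff_ordIso_Restr[OF r r'] unfolding ordIso_def by blast
  have g_below: "g ` Field r' \<subseteq> underS r a"
    unfolding iso_Field[OF g] by (rule Field_Restr_subset)
  have g_strict: "g x \<in> underS r (g y)" if "x \<in> underS r' y" for x y
  proof -
    have "y \<in> Field r'"
      using that unfolding underS_def Field_def by blast
    moreover have "embed r' (Restr r (underS r a)) g"
      using g unfolding iso_def by simp
    ultimately have "g x \<in> underS (Restr r (underS r a)) (g y)"
      using embed_underS[OF r'] that unfolding bij_betw_def by blast
    then show ?thesis
      unfolding underS_Restr_iff by blast
  qed
  have "(g \<circ> h) a \<in> underS r a"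
    using a maps g_below by auto
  moreover have "(g \<circ> h) a \<notin> underS r a"
    by (rule strict_mono_not_underS[OF r]) (simp add: g_strict strict)
  ultimately show False
    by blast
qed

lemma Restr_ordLeq_Restr:
  assumes "Well_order r" and "A \<subseteq> B"
  shows "Restr r A \<le>o Restr r B"
  by (rule ordLeq_if_strict_mono[where h = id, OF Well_order_Restr Well_order_Restr])
    (use assms in \<open>auto simp: underS_def Field_def\<close>)

lemma Restr_ordLeq: "Well_order r \<Longrightarrow> Restr r A \<le>o r"
  using Restr_ordLeq_Restr[of r A UNIV] by simp

lemma ordLeq_Restr_imp_ordIso_Restr:
  assumes r: "Well_order r" and "\<tau> \<le>o Restr r A"
  shows "\<exists>Y \<subseteq> A \<inter> Field r. Restr r Y =o \<tau>"
proof -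
  obtain f where f: "embed \<tau> (Restr r A) f" and \<tau>: "Well_order \<tau>"
    using assms(2) unfolding ordLeq_def by blast
  let ?Y = "f ` Field \<tau>"
  have rA: "Well_order (Restr r A)"
    using Well_order_Restr[OF r] .
  have Y: "?Y \<subseteq> A \<inter> Field r"
    using embed_Field[OF f] unfolding Field_def by blast
  then have "Restr (Restr r A) ?Y = Restr r ?Y"
    by blast
  moreover have "iso \<tau> (Restr (Restr r A) ?Y) f"
    using embed_implies_iso_Restr[OF rA \<tau> f] .
  ultimately have "iso \<tau> (Restr r ?Y) f"
    by simp
  then have "\<tau> =o Restr r ?Y"
    using \<tau> Well_order_Restr[OF r] unfolding ordIso_def by blast
  then have "Restr r ?Y =o \<tau>"
    by (rule ordIso_symmetric)
  with Y show ?thesis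
    by blast
qed

lemma Restr_ordIso_if_card_of_ordIso:
  assumes r: "Card_order r" and B: "B \<subseteq> Field r" and card: "|B| =o r"
  shows "Restr r B =o r"
proof -
  have wo: "Well_order r"
    using r card_order_on_well_order_on by blast
  have "Field (Restr r B) = B"
    using Refl_Field_Restr2[OF _ B] wo unfolding order_on_defs by blast
  then have "well_order_on B (Restr r B)"
    using Well_order_Restr[OF wo, of B] by simp
  then have "r \<le>o Restr r B"
    using card_of_least ordIso_ordLeq_trans ordIso_symmetric[OF card] by blast
  then show ?thesis
    using Restr_ordLeq[OF wo] ordIso_iff_ordLeq by blast
qed

section \<open>Cardinality arguments\<close>

lemma card_of_under_cardSuc:
  assumes r: "Card_order r" and inf: "infinite (Field r)"
  shows "|under (cardSuc r) b| \<le>o r"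
proof (cases "b \<in> Field (cardSuc r)")
  case True
  have "|underS (cardSuc r) b| \<le>o r"
    using card_of_underS[OF cardSuc_Card_order[OF r] True]
      cardSuc_ordLeq_ordLess[OF r card_of_Card_order] by blast
  moreover have "|{b}| \<le>o r"
    using inf card_of_singl_ordLeq card_of_Field_ordIso[OF r] ordLeq_ordIso_trans
    by (metis finite.emptyI)
  ultimately have "|underS (cardSuc r) b \<union> {b}| \<le>o r"
    using card_of_Un_ordLeq_infinite_Field inf r by blast
  moreover have "under (cardSuc r) b = underS (cardSuc r) b \<union> {b}"
    using Refl_under_underS[OF _ True] cardSuc_Card_order[OF r]
    unfolding card_order_on_def order_on_defs by blast
  ultimately show ?thesis by simp
next
  case False
  then have "under (cardSuc r) b = {}"
    unfolding under_def Field_def by blast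
  then show ?thesis
    using card_of_empty1[of r] r by simp
qed

lemma pigeonhole_cardSuc:
  assumes r: "Card_order r" "infinite (Field r)"
    and B: "|B| =o cardSuc r" and img: "|f ` B| \<le>o r"
  shows "\<exists>x\<in>B. |{y\<in>B. f y = f x}| =o cardSuc r"
proof (rule ccontr)
  assume no_large_fibre: "\<not> ?thesis"
  have "\<forall>k\<in>f ` B. |{y\<in>B. f y = k}| \<le>o r"
  proof
    fix k assume "k \<in> f ` B"
    have "|{y\<in>B. f y = k}| \<le>o cardSuc r"
      using card_of_mono1[of "{y\<in>B. f y = k}" B] B ordLeq_ordIso_trans by blast
    moreover have "\<not> |{y\<in>B. f y = k}| =o cardSuc r"
      using no_large_fibre \<open>k \<in> f ` B\<close> by blast
    ultimately show "|{y\<in>B. f y = k}| \<le>o r"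
      using ordLeq_iff_ordLess_or_ordIso cardSuc_ordLeq_ordLess[OF r(1) card_of_Card_order]
      by blast
  qed
  from card_of_UNION_ordLeq_infinite_Field[OF r(2) r(1) img this]
  have "|\<Union>k\<in>f ` B. {y\<in>B. f y = k}| \<le>o r" .
  moreover have "(\<Union>k\<in>f ` B. {y\<in>B. f y = k}) = B"
    by blast
  ultimately have "|B| \<le>o r"
    by simp
  then have "|B| <o cardSuc r"
    using cardSuc_ordLeq_ordLess[OF r(1) card_of_Card_order] by blast
  then show False
    using B not_ordLess_ordIso by blast
qed

lemma pigeonhole_w2:
  "|B| =o w2 \<Longrightarrow> |f ` B| \<le>o w1 \<Longrightarrow> \<exists>x\<in>B. |{y\<in>B. f y = f x}| =o w2"
  using pigeonhole_cardSuc[OF w1_Card_order infinite_Field_w1] unfolding w2_def by blast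

lemma card_of_image_nat_ordLeq_w1:
  fixes f :: "'a \<Rightarrow> nat"
  shows "|f ` A| \<le>o w1"
proof -
  have "|f ` A| \<le>o |UNIV :: nat set|"
    by (rule card_of_mono1) simp
  also have "|UNIV :: nat set| \<le>o natLeq"
    using card_of_nat ordIso_imp_ordLeq by blast
  also have "natLeq \<le>o w1"
    using natLeq_ordLess_w1 ordLess_imp_ordLeq by blast
  finally show ?thesis .
qed

lemma card_of_not_unbounded1:
  assumes S: "S \<subseteq> Field w1" and "\<not> unbounded1 S"
  shows "|S| \<le>o natLeq"
proof -
  obtain x where x: "x \<in> Field w1" and nx: "\<forall>y\<in>S. (x, y) \<in> w1 \<longrightarrow> y = x"
    using assms unfolding unbounded1_def by blast
  have "S \<subseteq> under w1 x"
    using S nx w1_less_linear[OF x] unfolding under_def underS_def by blast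
  moreover have "|under w1 x| \<le>o natLeq"
    using card_of_under_cardSuc[OF natLeq_Card_order] unfolding w1_def Field_natLeq by simp
  ultimately show ?thesis
    using card_of_mono1 ordLeq_transitive by blast
qed

lemma unbounded1_Field_w1: "unbounded1 (Field w1)"
  using card_of_not_unbounded1[of "Field w1"] natLeq_ordLess_card_of_Field_w1 not_ordLess_ordLeq
  by blast

lemma w1_no_max: "x \<in> Field w1 \<Longrightarrow> \<exists>y\<in>Field w1. x \<in> underS w1 y"
  using unbounded1_Field_w1 unfolding unbounded1_def underS_def by blast

lemma exists_unbounded_colour:
  fixes c :: "nat set \<Rightarrow> nat"
  shows "\<exists>n. unbounded1 {y\<in>Field w1. c y = n}"
proof (rule ccontr)
  assume none: "\<not> ?thesis"
  have "|{y\<in>Field w1. c y = n}| \<le>o natLeq" for n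
    using none card_of_not_unbounded1[of "{y\<in>Field w1. c y = n}"] by blast
  then have "\<forall>n\<in>UNIV. |{y\<in>Field w1. c y = n}| \<le>o natLeq"
    by blast
  from card_of_UNION_ordLeq_infinite_Field[OF _ natLeq_Card_order ordIso_imp_ordLeq[OF card_of_nat] this]
  have "|\<Union>n. {y\<in>Field w1. c y = n}| \<le>o natLeq"
    by (simp add: Field_natLeq)
  moreover have "(\<Union>n. {y\<in>Field w1. c y = n}) = Field w1"
    by blast
  ultimately show False
    using natLeq_ordLess_card_of_Field_w1 not_ordLess_ordLeq by auto
qed

lemma large_family_unbounded_colour:
  fixes c :: "nat set set \<Rightarrow> nat set \<Rightarrow> nat"
  shows "\<exists>k B. B \<subseteq> Field w2 \<and> |B| =o w2 \<and> (\<forall>\<alpha>\<in>B. unbounded1 {y\<in>Field w1. c \<alpha> y = k})"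
proof -
  obtain colour where colour: "\<forall>\<alpha>. unbounded1 {y\<in>Field w1. c \<alpha> y = colour \<alpha>}"
    using choice[OF allI[OF exists_unbounded_colour]] by blast
  obtain \<alpha>0 where "|{\<alpha>\<in>Field w2. colour \<alpha> = colour \<alpha>0}| =o w2"
    using pigeonhole_w2[OF card_of_Field_ordIso[OF w2_Card_order] card_of_image_nat_ordLeq_w1]
    by blast
  with colour show ?thesis
    by (intro exI[of _ "colour \<alpha>0"] exI[of _ "{\<alpha>\<in>Field w2. colour \<alpha> = colour \<alpha>0}"])
      (auto; metis)
qed

section \<open>Initial segments of omega times omega\<close>

lemma Field_omega_sq: "Field omega_sq = UNIV"
  unfolding omega_sq_def Field_def by auto

lemma Well_order_omega_sq: "Well_order omega_sq"
proof -
  have "omega_sq - Id \<subseteq> less_than <*lex*> less_than"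
    unfolding omega_sq_def by auto
  then have "wf (omega_sq - Id)"
    using wf_subset[OF wf_lex_prod[OF wf_less_than wf_less_than]] by blast
  then show ?thesis
    unfolding well_order_on_def linear_order_on_def partial_order_on_def preorder_on_def
      Field_omega_sq
    by (auto simp: omega_sq_def refl_on_def trans_def antisym_def total_on_def)
qed

lemma underS_omega_sq:
  "p \<in> underS omega_sq q \<longleftrightarrow> fst p < fst q \<or> fst p = fst q \<and> snd p < snd q"
  by (cases p; cases q) (auto simp: underS_def omega_sq_def)

text \<open>The pairs with first coordinate below \<open>N\<close> form the initial segment of type
  \<open>\<omega>\<cdot>N\<close> of \<open>omega_sq\<close>.\<close>

definition embeds_blocks :: "nat \<Rightarrow> (nat \<times> nat \<Rightarrow> nat set) \<Rightarrow> nat set set \<Rightarrow> bool" where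
  "embeds_blocks N h S \<longleftrightarrow>
     (\<forall>q. fst q < N \<longrightarrow> h q \<in> S \<and> (\<forall>p\<in>underS omega_sq q. h p \<in> underS w1 (h q)))"

definition prepend_block :: "(nat \<Rightarrow> 'a) \<Rightarrow> (nat \<times> nat \<Rightarrow> 'a) \<Rightarrow> nat \<times> nat \<Rightarrow> 'a" where
  "prepend_block g h = (\<lambda>(a, b). case a of 0 \<Rightarrow> g b | Suc a' \<Rightarrow> h (a', b))"

lemma prepend_block_strict_mono:
  assumes g: "\<And>k. g k \<in> underS w1 d"
    and g_mono: "\<And>k k'. k < k' \<Longrightarrow> g k \<in> underS w1 (g k')"
    and h: "embeds_blocks N h (S \<inter> aboveS w1 d)"
    and pq: "p \<in> underS omega_sq q" and q: "fst q < Suc N"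
  shows "prepend_block g h p \<in> underS w1 (prepend_block g h q)"
proof -
  obtain a b c e where p_eq: "p = (c, e)" and q_eq: "q = (a, b)"
    by (cases p, cases q)
  show ?thesis
  proof (cases a)
    case 0
    then show ?thesis
      using pq g_mono unfolding p_eq q_eq underS_omega_sq prepend_block_def by auto
  next
    case (Suc a')
    have hq: "h (a', b) \<in> aboveS w1 d" "\<forall>p\<in>underS omega_sq (a', b). h p \<in> underS w1 (h (a', b))"
      using h q unfolding q_eq Suc embeds_blocks_def by auto
    show ?thesis
    proof (cases c)
      case 0
      have "d \<in> underS w1 (h (a', b))"
        using hq(1) by (simp add: mem_aboveS_iff)
      then show ?thesis
        using g[of e] w1_less_trans unfolding p_eq q_eq Suc 0 prepend_block_def by auto
    next
      case (Suc c')
      have "(c', e) \<in> underS omega_sq (a', b)"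
        using pq unfolding p_eq q_eq \<open>a = Suc a'\<close> Suc underS_omega_sq by auto
      then show ?thesis
        using hq(2) unfolding p_eq q_eq \<open>a = Suc a'\<close> Suc prepend_block_def by auto
    qed
  qed
qed

lemma embeds_blocks_prepend_block:
  assumes g: "\<And>k. g k \<in> S \<inter> underS w1 d"
    and g_mono: "\<And>k k'. k < k' \<Longrightarrow> g k \<in> underS w1 (g k')"
    and h: "embeds_blocks N h (S \<inter> aboveS w1 d)"
  shows "embeds_blocks (Suc N) (prepend_block g h) S"
  unfolding embeds_blocks_def
proof (intro allI impI conjI ballI)
  fix q :: "nat \<times> nat"
  assume q: "fst q < Suc N"
  show "prepend_block g h q \<in> S"
    using g h q unfolding embeds_blocks_def prepend_block_def
    by (cases q) (auto split: nat.split)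
  show "prepend_block g h p \<in> underS w1 (prepend_block g h q)" if "p \<in> underS omega_sq q" for p
    using prepend_block_strict_mono[of g d, OF _ g_mono h that q] g by blast
qed

lemma embeds_blocks_ordLeq:
  assumes h: "embeds_blocks N h S" and S: "S \<subseteq> Field w1"
  shows "Restr omega_sq {p. fst p < N} \<le>o Restr w1 S"
proof (rule ordLeq_if_strict_mono[OF Well_order_Restr[OF Well_order_omega_sq]
      Well_order_Restr[OF w1_Well_order]])
  have "Field (Restr omega_sq {p. fst p < N}) = {p. fst p < N}"
    unfolding Field_def omega_sq_def by force
  moreover have "h q \<in> Field (Restr w1 S)" if "fst q < N" for q
  proof -
    have "h q \<in> S"
      using h that unfolding embeds_blocks_def by blast
    then have "(h q, h q) \<in> Restr w1 S"
      using S w1_refl by blast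
    then show ?thesis
      unfolding Field_def by blast
  qed
  ultimately show "h ` Field (Restr omega_sq {p. fst p < N}) \<subseteq> Field (Restr w1 S)"
    by blast
next
  fix p q assume "p \<in> underS (Restr omega_sq {p. fst p < N}) q"
  then have "p \<in> underS omega_sq q" "fst p < N" "fst q < N"
    unfolding underS_Restr_iff by auto
  then show "h p \<in> underS (Restr w1 S) (h q)"
    using h unfolding embeds_blocks_def underS_Restr_iff by blast
qed

section \<open>Consequences of tiltan\<close>

lemma club1_aboveS:
  assumes \<beta>: "\<beta> \<in> Field w1"
  shows "club1 (aboveS w1 \<beta>)"
proof -
  have sub: "aboveS w1 \<beta> \<subseteq> Field w1"
    unfolding aboveS_def Field_def by blast
  have "closed1 (aboveS w1 \<beta>)"
    unfolding closed1_def
  proof (intro conjI allI impI sub)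
    fix a assume a: "limit1 a"
      and cofinal: "\<forall>b\<in>underS w1 a. \<exists>c\<in>aboveS w1 \<beta> \<inter> underS w1 a. b \<in> underS w1 c"
    obtain b where "b \<in> underS w1 a"
      using a unfolding limit1_def by blast
    with cofinal obtain c where "c \<in> aboveS w1 \<beta>" "c \<in> underS w1 a"
      by blast
    then show "a \<in> aboveS w1 \<beta>"
      using w1_less_trans unfolding mem_aboveS_iff by blast
  qed
  moreover have "unbounded1 (aboveS w1 \<beta>)"
    unfolding unbounded1_def
  proof (intro conjI ballI sub)
    fix x assume x: "x \<in> Field w1"
    obtain m where m: "m \<in> Field w1" "(x, m) \<in> w1" "(\<beta>, m) \<in> w1"
      using w1_less_linear[OF x \<beta>] w1_refl x \<beta> unfolding underS_def by blast
    then obtain y where "m \<in> underS w1 y"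
      using w1_no_max by blast
    then have "x \<in> underS w1 y" "y \<in> aboveS w1 \<beta>"
      using m w1_le_less_trans unfolding mem_aboveS_iff by blast+
    then show "\<exists>y\<in>aboveS w1 \<beta>. (x, y) \<in> w1 \<and> y \<noteq> x"
      unfolding underS_def by blast
  qed
  ultimately show ?thesis
    unfolding club1_def by blast
qed

locale tiltan =
  fixes T :: "nat set \<Rightarrow> nat set set"
  assumes T_below: "limit1 a \<Longrightarrow> T a \<subseteq> underS w1 a"
    and T_cofinal: "limit1 a \<Longrightarrow> b \<in> underS w1 a \<Longrightarrow> \<exists>c\<in>T a. (b, c) \<in> w1"
    and T_guesses: "unbounded1 A \<Longrightarrow> stationary1 {a. limit1 a \<and> T a \<subseteq> A}"

lemma clubsuit_imp_tiltan: "clubsuit \<Longrightarrow> \<exists>T. tiltan T"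
  unfolding clubsuit_def tiltan_def by blast

context tiltan
begin

lemma guess_above:
  assumes "unbounded1 X" and "\<beta> \<in> Field w1"
  shows "\<exists>\<delta>. limit1 \<delta> \<and> T \<delta> \<subseteq> X \<and> \<beta> \<in> underS w1 \<delta>"
proof -
  have "{a. limit1 a \<and> T a \<subseteq> X} \<inter> aboveS w1 \<beta> \<noteq> {}"
    using T_guesses[OF assms(1)] club1_aboveS[OF assms(2)] unfolding stationary1_def by blast
  then show ?thesis
    by (auto simp: mem_aboveS_iff)
qed

lemma T_omega_chain:
  assumes \<delta>: "limit1 \<delta>" and \<beta>: "\<beta> \<in> underS w1 \<delta>"
  shows "\<exists>g :: nat \<Rightarrow> nat set. (\<forall>k. g k \<in> T \<delta> \<and> \<beta> \<in> underS w1 (g k)) \<and>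
    (\<forall>k k'. k < k' \<longrightarrow> g k \<in> underS w1 (g k'))"
proof -
  have "\<forall>b\<in>underS w1 \<delta>. \<exists>c. c \<in> T \<delta> \<and> b \<in> underS w1 c"
  proof
    fix b assume "b \<in> underS w1 \<delta>"
    then obtain c' where c': "c' \<in> underS w1 \<delta>" "b \<in> underS w1 c'"
      using \<delta> unfolding limit1_def by blast
    then obtain c where "c \<in> T \<delta>" "(c', c) \<in> w1"
      using T_cofinal[OF \<delta>] by blast
    then show "\<exists>c. c \<in> T \<delta> \<and> b \<in> underS w1 c"
      using c' w1_less_le_trans by blast
  qed
  then obtain succ where succ: "\<And>b. b \<in> underS w1 \<delta> \<Longrightarrow> succ b \<in> T \<delta> \<and> b \<in> underS w1 (succ b)"
    by metis
  define c where "c k = (succ ^^ k) \<beta>" for k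
  have c_below: "c k \<in> underS w1 \<delta>" for k
  proof (induction k)
    case (Suc k)
    then show ?case
      using succ T_below[OF \<delta>] unfolding c_def by auto
  qed (simp add: c_def \<beta>)
  have c_Suc: "c (Suc k) \<in> T \<delta>" "c k \<in> underS w1 (c (Suc k))" for k
    using succ[OF c_below[of k]] unfolding c_def by simp_all
  have c_mono: "c k \<in> underS w1 (c k')" if "k < k'" for k k'
    using w1_less_chain[of c, OF c_Suc(2) that] .
  have "c 0 = \<beta>"
    unfolding c_def by simp
  define g where "g k = c (Suc k)" for k
  have "\<forall>k. g k \<in> T \<delta> \<and> \<beta> \<in> underS w1 (g k)"
    using c_Suc(1) c_mono[of 0] \<open>c 0 = \<beta>\<close> unfolding g_def by simp
  moreover have "\<forall>k k'. k < k' \<longrightarrow> g k \<in> underS w1 (g k')"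
    using c_mono unfolding g_def by simp
  ultimately show ?thesis
    by blast
qed

lemma large_subfamily_common_guess:
  fixes A :: "'i \<Rightarrow> nat set set"
  assumes unbounded: "\<forall>\<alpha>\<in>B0. unbounded1 (A \<alpha>)" and B0: "|B0| =o w2" and \<beta>: "\<beta> \<in> Field w1"
  shows "\<exists>d B. B \<subseteq> B0 \<and> |B| =o w2 \<and> limit1 d \<and> \<beta> \<in> underS w1 d \<and> (\<forall>\<alpha>\<in>B. T d \<subseteq> A \<alpha>)"
proof -
  have "\<forall>\<alpha>\<in>B0. \<exists>\<delta>. limit1 \<delta> \<and> T \<delta> \<subseteq> A \<alpha> \<and> \<beta> \<in> underS w1 \<delta>"
    using guess_above unbounded \<beta> by blast
  then obtain \<delta> where \<delta>: "\<forall>\<alpha>\<in>B0. limit1 (\<delta> \<alpha>) \<and> T (\<delta> \<alpha>) \<subseteq> A \<alpha> \<and> \<beta> \<in> underS w1 (\<delta> \<alpha>)"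
    by (rule bchoice[elim_format]) blast
  have "\<delta> ` B0 \<subseteq> Field w1"
    using \<delta> unfolding limit1_def by blast
  then have "|\<delta> ` B0| \<le>o w1"
    using ordLeq_ordIso_trans[OF card_of_mono1 card_of_Field_ordIso[OF w1_Card_order]] by blast
  then obtain \<alpha>0 where "\<alpha>0 \<in> B0" and "|{\<alpha>\<in>B0. \<delta> \<alpha> = \<delta> \<alpha>0}| =o w2"
    using pigeonhole_w2[OF B0] by blast
  with \<delta> show ?thesis
    by (intro exI[of _ "\<delta> \<alpha>0"] exI[of _ "{\<alpha>\<in>B0. \<delta> \<alpha> = \<delta> \<alpha>0}"]) (auto; metis subsetD)
qed

lemma large_subfamily_embeds_blocks:
  fixes A :: "'i \<Rightarrow> nat set set"
  assumes "\<forall>\<alpha>\<in>B0. unbounded1 (A \<alpha>)" and "|B0| =o w2" and "\<beta> \<in> Field w1"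
  shows "\<exists>B h. B \<subseteq> B0 \<and> |B| =o w2 \<and> embeds_blocks N h ((\<Inter>\<alpha>\<in>B. A \<alpha>) \<inter> aboveS w1 \<beta>)"
  using assms
proof (induction N arbitrary: B0 \<beta>)
  case 0
  then show ?case
    unfolding embeds_blocks_def by blast
next
  case (Suc N)
  obtain d B1 where B1: "B1 \<subseteq> B0" "|B1| =o w2" and d: "limit1 d" "\<beta> \<in> underS w1 d"
    and guessed: "\<forall>\<alpha>\<in>B1. T d \<subseteq> A \<alpha>"
    using large_subfamily_common_guess[OF Suc.prems] by blast
  have "\<forall>\<alpha>\<in>B1. unbounded1 (A \<alpha>)" "d \<in> Field w1"
    using Suc.prems(1) B1(1) d(1) unfolding limit1_def by blast+
  from Suc.IH[OF this(1) B1(2) this(2)]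
  obtain B h where B: "B \<subseteq> B1" "|B| =o w2"
    and h: "embeds_blocks N h ((\<Inter>\<alpha>\<in>B. A \<alpha>) \<inter> aboveS w1 d)"
    by blast
  obtain g :: "nat \<Rightarrow> nat set" where g: "\<And>k. g k \<in> T d \<and> \<beta> \<in> underS w1 (g k)"
    and g_mono: "\<And>k k'. k < k' \<Longrightarrow> g k \<in> underS w1 (g k')"
    using T_omega_chain[OF d] by blast
  let ?S = "(\<Inter>\<alpha>\<in>B. A \<alpha>) \<inter> aboveS w1 \<beta>"
  have "g k \<in> ?S \<inter> underS w1 d" for k
    using g[of k] T_below[OF d(1)] guessed B(1) by (auto simp: mem_aboveS_iff)
  moreover have "(\<Inter>\<alpha>\<in>B. A \<alpha>) \<inter> aboveS w1 d = ?S \<inter> aboveS w1 d"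
    using d(2) w1_less_trans by (auto simp: mem_aboveS_iff)
  ultimately have "embeds_blocks (Suc N) (prepend_block g h) ?S"
    using embeds_blocks_prepend_block g_mono h by metis
  then show ?case
    using B B1(1) by blast
qed

lemma large_subfamily_intersection_ordLeq:
  fixes A :: "'i \<Rightarrow> nat set set" and \<tau> :: "'c rel"
  assumes unbounded: "\<forall>\<alpha>\<in>B0. unbounded1 (A \<alpha>)" and B0: "|B0| =o w2"
    and \<tau>: "Well_order \<tau>" "\<tau> <o omega_sq"
  shows "\<exists>B\<subseteq>B0. |B| =o w2 \<and> \<tau> \<le>o Restr w1 (\<Inter>\<alpha>\<in>B. A \<alpha>)"
proof -
  obtain m k where mk: "\<tau> =o Restr omega_sq (underS omega_sq (m, k))"
    using \<tau> ordLess_iff_ordIso_Restr[OF Well_order_omega_sq] by fastforce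
  obtain \<beta> where \<beta>: "\<beta> \<in> Field w1"
    using infinite_Field_w1 by (metis finite.emptyI ex_in_conv)
  obtain B h where B: "B \<subseteq> B0" "|B| =o w2"
    and h: "embeds_blocks (Suc m) h ((\<Inter>\<alpha>\<in>B. A \<alpha>) \<inter> aboveS w1 \<beta>)"
    using large_subfamily_embeds_blocks[OF unbounded B0 \<beta>] by blast
  have "aboveS w1 \<beta> \<subseteq> Field w1"
    unfolding aboveS_def Field_def by blast
  have "underS omega_sq (m, k) \<subseteq> {p. fst p < Suc m}"
    by (auto simp: underS_omega_sq)
  then have "\<tau> \<le>o Restr omega_sq {p. fst p < Suc m}"
    using mk Restr_ordLeq_Restr[OF Well_order_omega_sq] ordIso_ordLeq_trans by blast
  moreover have "Restr omega_sq {p. fst p < Suc m} \<le>o Restr w1 ((\<Inter>\<alpha>\<in>B. A \<alpha>) \<inter> aboveS w1 \<beta>)"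
    using embeds_blocks_ordLeq[OF h] \<open>aboveS w1 \<beta> \<subseteq> Field w1\<close> by blast
  moreover have "Restr w1 ((\<Inter>\<alpha>\<in>B. A \<alpha>) \<inter> aboveS w1 \<beta>) \<le>o Restr w1 (\<Inter>\<alpha>\<in>B. A \<alpha>)"
    using Restr_ordLeq_Restr[OF w1_Well_order] by blast
  ultimately have "\<tau> \<le>o Restr w1 (\<Inter>\<alpha>\<in>B. A \<alpha>)"
    using ordLeq_transitive by metis
  with B show ?thesis
    by blast
qed

lemma polarized_partition:
  fixes \<tau> :: "'d rel" and c :: "nat set set \<Rightarrow> nat set \<Rightarrow> nat"
  assumes \<tau>: "Well_order \<tau>" "\<tau> <o omega_sq"
  shows "\<exists>X Y. X \<subseteq> Field w2 \<and> Y \<subseteq> Field w1 \<and> Restr w2 X =o w2 \<and> Restr w1 Y =o \<tau> \<and>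
    (\<exists>k. \<forall>x\<in>X. \<forall>y\<in>Y. c x y = k)"
proof -
  obtain k B0 where B0: "B0 \<subseteq> Field w2" "|B0| =o w2"
    and rows: "\<forall>\<alpha>\<in>B0. unbounded1 {y\<in>Field w1. c \<alpha> y = k}"
    using large_family_unbounded_colour by blast
  from large_subfamily_intersection_ordLeq[OF rows B0(2) \<tau>]
  obtain B where B: "B \<subseteq> B0" "|B| =o w2"
    and \<tau>_le: "\<tau> \<le>o Restr w1 (\<Inter>\<alpha>\<in>B. {y\<in>Field w1. c \<alpha> y = k})"
    by blast
  obtain Y where Y: "Y \<subseteq> (\<Inter>\<alpha>\<in>B. {y\<in>Field w1. c \<alpha> y = k}) \<inter> Field w1" "Restr w1 Y =o \<tau>"
    using ordLeq_Restr_imp_ordIso_Restr[OF w1_Well_order \<tau>_le] by blast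
  have "Restr w2 B =o w2"
    using Restr_ordIso_if_card_of_ordIso[OF w2_Card_order _ B(2)] B(1) B0(1) by blast
  moreover have "\<forall>x\<in>B. \<forall>y\<in>Y. c x y = k"
    using Y(1) by blast
  moreover have "B \<subseteq> Field w2" "Y \<subseteq> Field w1"
    using B(1) B0(1) Y(1) by blast+
  ultimately show ?thesis
    using Y(2) by (intro exI[of _ B] exI[of _ Y]) blast
qed

end

theorem mainTheorem5:
  assumes "clubsuit"
  shows "(\<forall>(A :: nat set set \<Rightarrow> nat set set) (\<tau> :: 'c rel).
            (\<forall>\<alpha>\<in>Field w2. unbounded1 (A \<alpha>)) \<longrightarrow>
            Well_order \<tau> \<longrightarrow> (\<tau>, omega_sq) \<in> ordLess \<longrightarrow>
            (\<exists>B. B \<subseteq> Field w2 \<and> (card_of B, w2) \<in> ordIso \<and>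
                 (\<tau>, Restr w1 (\<Inter>\<alpha>\<in>B. A \<alpha>)) \<in> ordLeq))
       \<and> (\<forall>(\<tau> :: 'd rel) (c :: nat set set \<Rightarrow> nat set \<Rightarrow> nat).
            Well_order \<tau> \<longrightarrow> (\<tau>, omega_sq) \<in> ordLess \<longrightarrow>
            (\<exists>X Y. X \<subseteq> Field w2 \<and> Y \<subseteq> Field w1 \<and>
                 (Restr w2 X, w2) \<in> ordIso \<and> (Restr w1 Y, \<tau>) \<in> ordIso \<and>
                 (\<exists>k. \<forall>x\<in>X. \<forall>y\<in>Y. c x y = k)))"
proof -
  obtain T where "tiltan T"
    using clubsuit_imp_tiltan[OF assms] by blast
  then interpret tiltan T .
  show ?thesis
  proof (intro conjI allI impI)
    fix A :: "nat set set \<Rightarrow> nat set set" and \<tau> :: "'c rel"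
    assume "\<forall>\<alpha>\<in>Field w2. unbounded1 (A \<alpha>)" "Well_order \<tau>" "\<tau> <o omega_sq"
    then show "\<exists>B. B \<subseteq> Field w2 \<and> |B| =o w2 \<and> \<tau> \<le>o Restr w1 (\<Inter>\<alpha>\<in>B. A \<alpha>)"
      using large_subfamily_intersection_ordLeq card_of_Field_ordIso[OF w2_Card_order] by blast
  next
    fix \<tau> :: "'d rel" and c :: "nat set set \<Rightarrow> nat set \<Rightarrow> nat"
    assume "Well_order \<tau>" "\<tau> <o omega_sq"
    then show "\<exists>X Y. X \<subseteq> Field w2 \<and> Y \<subseteq> Field w1 \<and> Restr w2 X =o w2 \<and> Restr w1 Y =o \<tau> \<and>
        (\<exists>k. \<forall>x\<in>X. \<forall>y\<in>Y. c x y = k)"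
      by (rule polarized_partition)
  qed
qed

end
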